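(* Let $(\hat p_n)_{n\ge0}$ be the monic orthogonal polynomials with respect to a positive Borel measure on $\mathbb{R}$ with infinitely many points in its support. Then there exist sequences of positive numbers $(\rho_n)_{n\ge0}$ such that the normalized polynomials $p_n(x)=\rho_n\hat p_n(x)$ satisfy: for any positive integer $K$ and any real numbers $\gamma_0,\dots,\gamma_K$ with $\gamma_0=1$ and $\gamma_K\neq0$, the polynomials $$q_n(x)=\sum_{j=0}^K\gamma_jp_{n-j}(x)$$ have only real zeros for all $n$ sufficiently large (how large depending only on $K$ and $\gamma_0,\dots,\gamma_K$). *)

theory Defs
  imports "HOL-Analysis.Analysis" "HOL-Computational_Algebra.Polynomial"
begin

definition measure_support :: "real measure \<Rightarrow> real set" where
  "measure_support M = {x. \<forall>e>0. emeasure M (ball x e) > 0}"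

definition finite_moments :: "real measure \<Rightarrow> bool" where
  "finite_moments M \<longleftrightarrow> (\<forall>k::nat. integrable M (\<lambda>x. x ^ k))"

definition monic_orthogonal_polys :: "real measure \<Rightarrow> (nat \<Rightarrow> real poly) \<Rightarrow> bool" where
  "monic_orthogonal_polys M p \<longleftrightarrow>
     (\<forall>n. degree (p n) = n \<and> lead_coeff (p n) = 1) \<and>
     (\<forall>m n. m \<noteq> n \<longrightarrow> (\<integral>x. poly (p m) x * poly (p n) x \<partial>M) = 0)"

definition only_real_zeros :: "real poly \<Rightarrow> bool" where
  "only_real_zeros q \<longleftrightarrow> (\<forall>z::complex. poly (map_poly complex_of_real q) z = 0 \<longrightarrow> z \<in> \<real>)"

end

theory Submission
  imports Defs
begin

text \<open>The monic orthogonal polynomial \<open>phat n\<close> has \<open>n\<close> simple real zeros, so it changes sign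
  across \<open>n\<close> disjoint intervals \<open>[s - e, s + e]\<close>. The weights \<open>\<rho>\<close> grow so fast that at these
  finitely many test points the term \<open>\<rho> n * phat n\<close> dominates all \<open>\<rho> (n - j) * phat (n - j)\<close>,
  \<open>j \<ge> 1\<close>, as soon as \<open>n\<close> exceeds \<open>\<Sum>j=1..K. \<bar>\<gamma> j\<bar>\<close>. Then \<open>q\<^sub>n\<close> has the signs of \<open>phat n\<close>
  at the test points, hence a zero in each of the \<open>n\<close> intervals, and having degree at most \<open>n\<close>
  it has no other zeros.\<close>

lemma only_real_zeros_if_degree_le_card_roots:
  fixes q :: "real poly"
  assumes q0: "q \<noteq> 0" and deg: "degree q \<le> card {x. poly q x = 0}"
  shows "only_real_zeros q"
  unfolding only_real_zeros_def
proof (intro allI impI, rule ccontr)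
  fix z :: complex
  define Q where "Q = map_poly complex_of_real q"
  define R where "R = {x. poly q x = 0}"
  assume "poly Q z = 0" and "z \<notin> \<real>"
  have Q0: "Q \<noteq> 0" using q0 unfolding Q_def by (subst map_poly_eq_0_iff) auto
  have "poly Q (of_real x) = of_real (poly q x)" for x
    unfolding Q_def by (induction q) (auto simp: map_poly_pCons)
  hence "insert z (of_real ` R) \<subseteq> {w. poly Q w = 0}"
    using \<open>poly Q z = 0\<close> unfolding R_def by auto
  hence "card (insert z (of_real ` R)) \<le> degree Q"
    using card_mono[OF poly_roots_finite[OF Q0]] card_poly_roots_bound[OF Q0] by (meson order_trans)
  moreover have "card (insert z (of_real ` R)) = Suc (card R)"
  proof -
    have "z \<notin> of_real ` R" using \<open>z \<notin> \<real>\<close> by auto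
    moreover have "finite R" unfolding R_def using poly_roots_finite[OF q0] .
    ultimately show ?thesis by (simp add: card_image inj_on_def)
  qed
  moreover have "degree Q = degree q" unfolding Q_def by (simp add: degree_map_poly)
  ultimately show False using deg unfolding R_def by simp
qed

lemma only_real_zeros_if_sign_changes:
  fixes q :: "real poly"
  assumes "S \<noteq> {}" and "degree q \<le> card S" and "e > 0"
    and sep: "\<And>s t. s \<in> S \<Longrightarrow> t \<in> S \<Longrightarrow> s \<noteq> t \<Longrightarrow> 2 * e < \<bar>s - t\<bar>"
    and chg: "\<And>s. s \<in> S \<Longrightarrow> poly q (s - e) * poly q (s + e) < 0"
  shows "only_real_zeros q"
proof -
  have "\<exists>x. \<bar>x - s\<bar> < e \<and> poly q x = 0" if s: "s \<in> S" for s
  proof -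
    obtain x where "s - e < x" "x < s + e" "poly q x = 0"
      using poly_IVT[OF _ chg[OF s]] \<open>e > 0\<close> by auto
    thus ?thesis by (intro exI[of _ x]) auto
  qed
  then obtain r where r: "\<And>s. s \<in> S \<Longrightarrow> \<bar>r s - s\<bar> < e \<and> poly q (r s) = 0"
    by metis
  have q0: "q \<noteq> 0" using chg \<open>S \<noteq> {}\<close> by fastforce
  have "inj_on r S"
  proof (rule inj_onI, rule ccontr)
    fix s t assume "s \<in> S" "t \<in> S" "r s = r t" "s \<noteq> t"
    thus False using r[of s] r[of t] sep[of s t] by linarith
  qed
  hence "card S \<le> card {x. poly q x = 0}"
    using r by (intro card_inj_on_le[OF _ _ poly_roots_finite[OF q0]]) auto
  thus ?thesis using q0 \<open>degree q \<le> card S\<close> by (intro only_real_zeros_if_degree_le_card_roots) auto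
qed

lemma poly_nonneg_or_nonpos_if_no_roots:
  fixes f :: "real poly"
  assumes "\<And>x. poly f x \<noteq> 0"
  shows "(\<forall>x. poly f x \<ge> 0) \<or> (\<forall>x. poly f x \<le> 0)"
proof (rule ccontr)
  assume "\<not> ?thesis"
  then obtain a b where a: "poly f a < 0" and b: "poly f b > 0" by (meson not_le)
  consider "a < b" | "b < a" using a b by fastforce
  thus False
    using poly_IVT_pos[OF _ a b] poly_IVT_neg[OF _ b a] assms by cases blast+
qed

text \<open>Multiplying by the linear factors of the roots of odd multiplicity removes all sign changes.\<close>

lemma ex_roots_prod_constant_sign:
  fixes f :: "real poly"
  assumes "f \<noteq> 0"
  shows "\<exists>S. finite S \<and> S \<subseteq> {x. poly f x = 0} \<and>
     ((\<forall>x. poly f x * (\<Prod>s\<in>S. x - s) \<ge> 0) \<or> (\<forall>x. poly f x * (\<Prod>s\<in>S. x - s) \<le> 0))"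
  using assms
proof (induction "degree f" arbitrary: f rule: less_induct)
  case less
  show ?case
  proof (cases "\<exists>r. poly f r = 0")
    case False
    thus ?thesis using poly_nonneg_or_nonpos_if_no_roots by (intro exI[of _ "{}"]) auto
  next
    case True
    then obtain r where "poly f r = 0" by blast
    then obtain f1 where f1: "f = [:-r, 1:] * f1" by (metis dvdE poly_eq_0_iff_dvd)
    have "f1 \<noteq> 0" using less.prems f1 by auto
    hence "degree f1 < degree f" unfolding f1 by (subst degree_mult_eq) auto
    from less.hyps[OF this \<open>f1 \<noteq> 0\<close>] obtain S1 where S1: "finite S1" "S1 \<subseteq> {x. poly f1 x = 0}"
      and sg: "(\<forall>x. poly f1 x * (\<Prod>s\<in>S1. x - s) \<ge> 0) \<or> (\<forall>x. poly f1 x * (\<Prod>s\<in>S1. x - s) \<le> 0)"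
      by blast
    have pf: "poly f x = (x - r) * poly f1 x" for x unfolding f1 by (simp add: algebra_simps)
    have roots_f1: "{x. poly f1 x = 0} \<subseteq> {x. poly f x = 0}" using pf by auto
    show ?thesis
    proof (cases "r \<in> S1")
      case True
      have "poly f x * (\<Prod>s\<in>S1 - {r}. x - s) = poly f1 x * (\<Prod>s\<in>S1. x - s)" for x
        using prod.remove[OF S1(1) True, of "\<lambda>s. x - s"] pf by simp
      thus ?thesis using sg S1 roots_f1 by (intro exI[of _ "S1 - {r}"]) auto
    next
      case False
      have "poly f x * (\<Prod>s\<in>insert r S1. x - s) = (x - r)\<^sup>2 * (poly f1 x * (\<Prod>s\<in>S1. x - s))" for x
        using False S1(1) pf by (simp add: power2_eq_square)
      hence "(\<forall>x. poly f x * (\<Prod>s\<in>insert r S1. x - s) \<ge> 0) \<or> (\<forall>x. poly f x * (\<Prod>s\<in>insert r S1. x - s) \<le> 0)"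
        using sg by (metis mult_nonneg_nonneg mult_nonneg_nonpos zero_le_power2)
      thus ?thesis using S1 roots_f1 \<open>poly f r = 0\<close> by (intro exI[of _ "insert r S1"]) auto
    qed
  qed
qed

lemma sign_change_at_root_if_card_roots_eq_degree:
  fixes g :: "real poly"
  assumes g0: "g \<noteq> 0" and card_roots: "card {x. poly g x = 0} = degree g"
    and "poly g s = 0" and "e > 0"
    and isolated: "\<And>t. poly g t = 0 \<Longrightarrow> t \<noteq> s \<Longrightarrow> e < \<bar>s - t\<bar>"
  shows "poly g (s - e) * poly g (s + e) < 0"
proof -
  obtain R where gR: "g = [:-s, 1:] * R" by (metis dvdE poly_eq_0_iff_dvd \<open>poly g s = 0\<close>)
  have R0: "R \<noteq> 0" using g0 gR by auto
  have dg: "degree g = Suc (degree R)" unfolding gR using R0 by (subst degree_mult_eq) auto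
  have pg: "poly g x = (x - s) * poly R x" for x unfolding gR by (simp add: algebra_simps)
  have "poly R s \<noteq> 0"
  proof
    assume "poly R s = 0"
    hence "{x. poly g x = 0} \<subseteq> {x. poly R x = 0}" using pg by auto
    hence "card {x. poly g x = 0} \<le> degree R"
      using card_mono[OF poly_roots_finite[OF R0]] card_poly_roots_bound[OF R0] by (meson order_trans)
    thus False using card_roots dg by simp
  qed
  hence R_nonzero: "poly R y \<noteq> 0" if "\<bar>y - s\<bar> \<le> e" for y
    using that isolated[of y] pg by (force simp: abs_minus_commute)
  have "\<not> poly R (s - e) * poly R (s + e) < 0"
    using poly_IVT[of "s - e" "s + e" R] R_nonzero \<open>e > 0\<close> by force
  hence "poly R (s - e) * poly R (s + e) > 0"
    using R_nonzero[of "s - e"] R_nonzero[of "s + e"] \<open>e > 0\<close>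
    by (simp add: linorder_not_less order_le_less)
  moreover have "poly g (s - e) * poly g (s + e) = - (e * e) * (poly R (s - e) * poly R (s + e))"
    unfolding pg by (simp add: algebra_simps)
  ultimately show ?thesis using \<open>e > 0\<close> by (simp add: mult_pos_pos)
qed

lemma ex_separation_radius:
  fixes S :: "real set"
  assumes "finite S"
  shows "\<exists>e>0. \<forall>s\<in>S. \<forall>t\<in>S. s \<noteq> t \<longrightarrow> 2 * e < \<bar>s - t\<bar>"
proof -
  define D where "D = (\<lambda>(s, t). \<bar>s - t\<bar>) ` (S \<times> S - {(s, t). s = t})"
  have "finite D" unfolding D_def using assms by auto
  have D_pos: "d > 0" if "d \<in> D" for d using that unfolding D_def by auto
  show ?thesis
  proof (cases "D = {}")
    case True
    thus ?thesis unfolding D_def by (intro exI[of _ 1]) auto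
  next
    case False
    have "Min D > 0" using False \<open>finite D\<close> D_pos by simp
    moreover have "Min D / 3 < \<bar>s - t\<bar> / 2" if "s \<in> S" "t \<in> S" "s \<noteq> t" for s t
    proof -
      have "\<bar>s - t\<bar> \<in> D" using that unfolding D_def by force
      thus ?thesis using Min_le[OF \<open>finite D\<close>] \<open>Min D > 0\<close> by fastforce
    qed
    ultimately show ?thesis by (intro exI[of _ "Min D / 3"]) force
  qed
qed

lemma ex_sign_change_radius:
  fixes g :: "real poly"
  assumes "g \<noteq> 0" and "card {x. poly g x = 0} = degree g"
  shows "\<exists>e>0. (\<forall>s t. poly g s = 0 \<and> poly g t = 0 \<and> s \<noteq> t \<longrightarrow> 2 * e < \<bar>s - t\<bar>) \<and>
    (\<forall>s. poly g s = 0 \<longrightarrow> poly g (s - e) * poly g (s + e) < 0)"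
proof -
  obtain e where "e > 0" and sep: "\<forall>s\<in>{x. poly g x = 0}. \<forall>t\<in>{x. poly g x = 0}. s \<noteq> t \<longrightarrow> 2 * e < \<bar>s - t\<bar>"
    using ex_separation_radius[OF poly_roots_finite[OF \<open>g \<noteq> 0\<close>]] by blast
  have "poly g (s - e) * poly g (s + e) < 0" if "poly g s = 0" for s
    using sep that \<open>e > 0\<close>
    by (intro sign_change_at_root_if_card_roots_eq_degree[OF assms that \<open>e > 0\<close>]) force
  thus ?thesis using sep \<open>e > 0\<close> by blast
qed

lemma only_real_zeros_if_sgn_agrees:
  fixes g q :: "real poly"
  assumes "card {x. poly g x = 0} = degree g" and "0 < degree g" and "degree q \<le> degree g"
    and "e > 0"
    and sep: "\<And>s t. poly g s = 0 \<Longrightarrow> poly g t = 0 \<Longrightarrow> s \<noteq> t \<Longrightarrow> 2 * e < \<bar>s - t\<bar>"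
    and chg: "\<And>s. poly g s = 0 \<Longrightarrow> poly g (s - e) * poly g (s + e) < 0"
    and agree: "\<And>s. poly g s = 0 \<Longrightarrow>
      sgn (poly q (s - e)) = sgn (poly g (s - e)) \<and> sgn (poly q (s + e)) = sgn (poly g (s + e))"
  shows "only_real_zeros q"
proof (rule only_real_zeros_if_sign_changes[where S = "{x. poly g x = 0}"])
  show "{x. poly g x = 0} \<noteq> {}" using assms(1,2) by force
  show "poly q (s - e) * poly q (s + e) < 0" if "s \<in> {x. poly g x = 0}" for s
  proof -
    have "sgn (poly q (s - e) * poly q (s + e)) = sgn (poly g (s - e) * poly g (s + e))"
      using agree[of s] that by (simp add: sgn_mult)
    thus ?thesis using chg[of s] that by (metis mem_Collect_eq sgn_less)
  qed
qed (use assms sep in auto)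

lemma integrable_poly_if_finite_moments:
  assumes "finite_moments M"
  shows "integrable M (\<lambda>x. poly p x)"
proof -
  have "integrable M (\<lambda>x. \<Sum>i\<le>degree p. coeff p i * x ^ i)"
    using assms unfolding finite_moments_def
    by (intro Bochner_Integration.integrable_sum Bochner_Integration.integrable_mult_right) blast
  thus ?thesis by (simp add: poly_altdef)
qed

lemma finite_measure_if_finite_moments:
  assumes "finite_moments M"
  shows "finite_measure M"
proof (rule finite_measureI)
  have "integrable M (\<lambda>x. x ^ 0 :: real)"
    using assms unfolding finite_moments_def by blast
  thus "emeasure M (space M) \<noteq> \<infinity>" by (simp add: integrable_iff_bounded)
qed

lemma integral_poly_pos:
  fixes f :: "real poly"
  assumes M: "sets M = sets borel" "finite_moments M" "infinite (measure_support M)"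
    and "f \<noteq> 0" and nonneg: "\<And>x. poly f x \<ge> 0"
  shows "(\<integral>x. poly f x \<partial>M) > 0"
proof -
  interpret finite_measure M by (rule finite_measure_if_finite_moments[OF M(2)])
  have "\<not> measure_support M \<subseteq> {x. poly f x = 0}"
    using M(3) poly_roots_finite[OF \<open>f \<noteq> 0\<close>] finite_subset by blast
  then obtain x where x: "x \<in> measure_support M" and "poly f x \<noteq> 0" by blast
  hence fx: "poly f x > 0" using nonneg[of x] by linarith
  have "(poly f \<longlongrightarrow> poly f x) (nhds x)"
    by (intro tendsto_poly filterlim_ident)
  hence "\<forall>\<^sub>F y in nhds x. poly f x / 2 < poly f y" using fx by (intro order_tendstoD(1)) auto
  then obtain e where "e > 0" and near: "\<And>y. dist y x < e \<Longrightarrow> poly f x / 2 < poly f y"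
    unfolding eventually_nhds_metric by blast
  have ball: "ball x e \<in> sets M" using M(1) by simp
  have "emeasure M (ball x e) > 0" using x \<open>e > 0\<close> unfolding measure_support_def by auto
  hence "measure M (ball x e) > 0" by (simp add: emeasure_eq_measure)
  have "0 < poly f x / 2 * measure M (ball x e)"
    using fx \<open>measure M (ball x e) > 0\<close> by simp
  also have "\<dots> = (\<integral>y. poly f x / 2 * indicator (ball x e) y \<partial>M)"
    using ball by simp
  also have "\<dots> \<le> (\<integral>y. poly f y \<partial>M)"
  proof (rule integral_mono')
    show "integrable M (\<lambda>y. poly f y)" by (rule integrable_poly_if_finite_moments[OF M(2)])
    show "poly f x / 2 * indicator (ball x e) y \<le> poly f y" for y
      using near[of y] nonneg[of y] by (cases "y \<in> ball x e") (auto simp: dist_commute)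
  qed (rule nonneg)
  finally show ?thesis .
qed

lemma monic_orthogonal_polys_degree:
  assumes "monic_orthogonal_polys M p"
  shows "degree (p n) = n" and "p n \<noteq> 0"
  using assms unfolding monic_orthogonal_polys_def by (metis leading_coeff_0_iff zero_neq_one)+

lemma monic_orthogonal_polys_orthogonal_lower_degree:
  assumes "finite_moments M" and mop: "monic_orthogonal_polys M p" and "degree f < n"
  shows "(\<integral>x. poly (p n) x * poly f x \<partial>M) = 0"
  using \<open>degree f < n\<close>
proof (induction "degree f" arbitrary: f rule: less_induct)
  case less
  define d where "d = degree f"
  define r where "r = f - smult (lead_coeff f) (p d)"
  have "degree (p d) = d" and "lead_coeff (p d) = 1"
    using mop unfolding monic_orthogonal_polys_def by blast+
  have orth: "(\<integral>x. poly (p n) x * poly (p d) x \<partial>M) = 0"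
    using mop less.prems unfolding monic_orthogonal_polys_def d_def by auto
  have "(\<integral>x. poly (p n) x * poly r x \<partial>M) = 0"
  proof (cases "r = 0")
    case False
    have "degree r \<le> d" unfolding r_def d_def
      using \<open>degree (p d) = d\<close> d_def by (intro degree_diff_le) (auto intro: degree_smult_le[THEN order_trans])
    moreover have "coeff r d = 0"
      using \<open>degree (p d) = d\<close> \<open>lead_coeff (p d) = 1\<close> unfolding r_def d_def by simp
    ultimately have "degree r < d" using False by (metis leading_coeff_0_iff order_le_less)
    thus ?thesis using less d_def by simp
  qed simp
  moreover have "integrable M (\<lambda>x. poly (p n) x * poly q x)" for q
    using integrable_poly_if_finite_moments[OF \<open>finite_moments M\<close>, of "p n * q"] by simp
  ultimately have "(\<integral>x. lead_coeff f * (poly (p n) x * poly (p d) x) + poly (p n) x * poly r x \<partial>M) = 0"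
    using orth by simp
  moreover have "poly f x = lead_coeff f * poly (p d) x + poly r x" for x
    unfolding r_def by simp
  ultimately show ?case by (simp add: algebra_simps)
qed

text \<open>If \<open>p n\<close> changed sign at fewer than \<open>n\<close> zeros \<open>S\<close>, then \<open>p n * (\<Prod>s\<in>S. [:-s, 1:])\<close>
  would be a nonzero polynomial of constant sign whose integral vanishes by orthogonality.\<close>

lemma card_roots_monic_orthogonal_poly:
  assumes M: "sets M = sets borel" "finite_moments M" "infinite (measure_support M)"
    and mop: "monic_orthogonal_polys M p"
  shows "card {x. poly (p n) x = 0} = n"
proof -
  note monic_orthogonal_polys_degree[OF mop]
  obtain S where "finite S" and S: "S \<subseteq> {x. poly (p n) x = 0}"
    and sign: "(\<forall>x. poly (p n * (\<Prod>s\<in>S. [:-s, 1:])) x \<ge> 0) \<or> (\<forall>x. poly (p n * (\<Prod>s\<in>S. [:-s, 1:])) x \<le> 0)"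
    using ex_roots_prod_constant_sign[OF \<open>p n \<noteq> 0\<close>] by (auto simp: poly_prod)
  have "n \<le> card S"
  proof (rule ccontr)
    define h where "h = p n * (\<Prod>s\<in>S. [:-s, 1:])"
    assume "\<not> n \<le> card S"
    moreover have "degree (\<Prod>s\<in>S. [:-s, 1:]) = card S"
      by (subst degree_prod_eq_sum_degree) auto
    ultimately have "(\<integral>x. poly h x \<partial>M) = 0"
      using monic_orthogonal_polys_orthogonal_lower_degree[OF M(2) mop] unfolding h_def by simp
    moreover have "h \<noteq> 0" unfolding h_def using \<open>p n \<noteq> 0\<close> \<open>finite S\<close> by simp
    ultimately show False
      using sign integral_poly_pos[OF M, of h] integral_poly_pos[OF M, of "- h"] unfolding h_def
      by auto
  qed
  moreover have "card S \<le> card {x. poly (p n) x = 0}"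
    using card_mono[OF poly_roots_finite[OF \<open>p n \<noteq> 0\<close>] S] .
  moreover have "card {x. poly (p n) x = 0} \<le> n"
    using card_poly_roots_bound[OF \<open>p n \<noteq> 0\<close>] \<open>degree (p n) = n\<close> by simp
  ultimately show ?thesis by linarith
qed

lemma sign_change_radii_monic_orthogonal_polys:
  assumes "sets M = sets borel" "finite_moments M" "infinite (measure_support M)"
    and "monic_orthogonal_polys M p"
  obtains e where "\<And>n. e n > 0"
    and "\<And>n s t. poly (p n) s = 0 \<Longrightarrow> poly (p n) t = 0 \<Longrightarrow> s \<noteq> t \<Longrightarrow> 2 * e n < \<bar>s - t\<bar>"
    and "\<And>n s. poly (p n) s = 0 \<Longrightarrow> poly (p n) (s - e n) * poly (p n) (s + e n) < 0"
proof -
  have "\<forall>n. \<exists>e>0. (\<forall>s t. poly (p n) s = 0 \<and> poly (p n) t = 0 \<and> s \<noteq> t \<longrightarrow> 2 * e < \<bar>s - t\<bar>) \<and>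
      (\<forall>s. poly (p n) s = 0 \<longrightarrow> poly (p n) (s - e) * poly (p n) (s + e) < 0)"
    using ex_sign_change_radius monic_orthogonal_polys_degree[OF assms(4)]
      card_roots_monic_orthogonal_poly[OF assms] by simp
  then obtain e where "\<And>n. e n > 0"
    and "\<And>n s t. poly (p n) s = 0 \<Longrightarrow> poly (p n) t = 0 \<Longrightarrow> s \<noteq> t \<Longrightarrow> 2 * e n < \<bar>s - t\<bar>"
    and "\<And>n s. poly (p n) s = 0 \<Longrightarrow> poly (p n) (s - e n) * poly (p n) (s + e n) < 0"
    by metis
  thus ?thesis by (rule that)
qed

text \<open>The weights are chosen so that, at every test point \<open>y \<in> Y (Suc m)\<close>,
  \<open>\<rho> (Suc m) * \<bar>P (Suc m) y\<bar> \<ge> (m + 1) * \<rho> m * (1 + (\<Sum>i\<le>m. \<bar>P i y\<bar>))\<close>.\<close>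

definition dominating_weights :: "(nat \<Rightarrow> real \<Rightarrow> real) \<Rightarrow> (nat \<Rightarrow> real set) \<Rightarrow> nat \<Rightarrow> real" where
  "dominating_weights P Y n =
     (\<Prod>m<n. max 1 (\<Sum>y\<in>Y (Suc m). real (Suc m) * (1 + (\<Sum>i\<le>m. \<bar>P i y\<bar>)) / \<bar>P (Suc m) y\<bar>))"

lemma dominating_weights_pos: "dominating_weights P Y n > 0"
  unfolding dominating_weights_def by (intro prod_pos) auto

lemma dominating_weights_mono:
  assumes "m \<le> n"
  shows "dominating_weights P Y m \<le> dominating_weights P Y n"
proof -
  have "incseq (dominating_weights P Y)"
  proof (rule incseq_SucI)
    fix k
    show "dominating_weights P Y k \<le> dominating_weights P Y (Suc k)"
      using dominating_weights_pos[of P Y k]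
      unfolding dominating_weights_def by (simp add: prod.lessThan_Suc mult_le_cancel_left1)
  qed
  thus ?thesis using assms by (simp add: incseq_def)
qed

lemma dominating_weights_Suc_ge:
  assumes "finite (Y (Suc m))" and "y \<in> Y (Suc m)" and "P (Suc m) y \<noteq> 0"
  shows "real (Suc m) * dominating_weights P Y m * (1 + (\<Sum>i\<le>m. \<bar>P i y\<bar>))
    \<le> dominating_weights P Y (Suc m) * \<bar>P (Suc m) y\<bar>"
proof -
  define c where "c = (\<Sum>y\<in>Y (Suc m). real (Suc m) * (1 + (\<Sum>i\<le>m. \<bar>P i y\<bar>)) / \<bar>P (Suc m) y\<bar>)"
  have "real (Suc m) * (1 + (\<Sum>i\<le>m. \<bar>P i y\<bar>)) / \<bar>P (Suc m) y\<bar> \<le> c"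
    unfolding c_def using assms(1,2)
    by (intro member_le_sum[where f = "\<lambda>y. real (Suc m) * (1 + (\<Sum>i\<le>m. \<bar>P i y\<bar>)) / \<bar>P (Suc m) y\<bar>"])
      (auto intro!: divide_nonneg_nonneg add_nonneg_nonneg sum_nonneg)
  hence "real (Suc m) * (1 + (\<Sum>i\<le>m. \<bar>P i y\<bar>)) \<le> c * \<bar>P (Suc m) y\<bar>"
    using assms(3) by (simp add: divide_le_eq)
  also have "\<dots> \<le> max 1 c * \<bar>P (Suc m) y\<bar>" by (intro mult_right_mono) auto
  finally have "real (Suc m) * (1 + (\<Sum>i\<le>m. \<bar>P i y\<bar>)) \<le> max 1 c * \<bar>P (Suc m) y\<bar>" .
  hence "dominating_weights P Y m * (real (Suc m) * (1 + (\<Sum>i\<le>m. \<bar>P i y\<bar>)))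
      \<le> dominating_weights P Y m * (max 1 c * \<bar>P (Suc m) y\<bar>)"
    using dominating_weights_pos[of P Y m] by (intro mult_left_mono) auto
  thus ?thesis unfolding dominating_weights_def c_def by (simp add: prod.lessThan_Suc ac_simps)
qed

lemma sgn_add_eq_if_abs_less:
  fixes a b :: real
  assumes "\<bar>b\<bar> < \<bar>a\<bar>"
  shows "sgn (a + b) = sgn a"
  using assms by (cases a "0::real" rule: linorder_cases) (auto simp: sgn_real_def)

lemma sgn_weighted_sum_eq_sgn_leading:
  fixes P :: "nat \<Rightarrow> real \<Rightarrow> real" and Y :: "nat \<Rightarrow> real set" and \<gamma> :: "nat \<Rightarrow> real"
  defines "\<rho> \<equiv> dominating_weights P Y"
  assumes "finite (Y n)" and "y \<in> Y n" and "P n y \<noteq> 0"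
    and "\<gamma> 0 = 1" and G_less: "(\<Sum>j=1..K. \<bar>\<gamma> j\<bar>) < real n"
  shows "sgn (\<Sum>j\<le>K. \<gamma> j * \<rho> (n - j) * P (n - j) y) = sgn (P n y)"
proof -
  have "0 \<le> (\<Sum>j=1..K. \<bar>\<gamma> j\<bar>)" by (intro sum_nonneg) auto
  hence "n \<noteq> 0" using G_less by linarith
  then obtain m where n: "n = Suc m" using not0_implies_Suc by blast
  define A where "A = (\<Sum>i\<le>m. \<bar>P i y\<bar>)"
  define E where "E = (\<Sum>j=1..K. \<gamma> j * \<rho> (n - j) * P (n - j) y)"
  have "{..K} = insert 0 {1..K}" by auto
  hence split: "(\<Sum>j\<le>K. \<gamma> j * \<rho> (n - j) * P (n - j) y) = \<rho> n * P n y + E"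
    unfolding E_def using \<open>\<gamma> 0 = 1\<close> by simp
  have "\<bar>E\<bar> \<le> (\<Sum>j=1..K. \<bar>\<gamma> j\<bar> * (\<rho> m * A))"
    unfolding E_def
  proof (rule order_trans[OF sum_abs sum_mono])
    fix j assume "j \<in> {1..K}"
    hence "n - j \<le> m" using n by auto
    hence "\<rho> (n - j) \<le> \<rho> m" and "\<bar>P (n - j) y\<bar> \<le> A"
      unfolding \<rho>_def A_def by (auto intro: dominating_weights_mono member_le_sum)
    hence "\<rho> (n - j) * \<bar>P (n - j) y\<bar> \<le> \<rho> m * A"
      using dominating_weights_pos[of P Y] unfolding \<rho>_def by (intro mult_mono) (auto intro: less_imp_le)
    thus "\<bar>\<gamma> j * \<rho> (n - j) * P (n - j) y\<bar> \<le> \<bar>\<gamma> j\<bar> * (\<rho> m * A)"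
      using dominating_weights_pos[of P Y "n - j"] unfolding \<rho>_def
      by (simp add: abs_mult mult.assoc mult_left_mono)
  qed
  also have "\<dots> = (\<Sum>j=1..K. \<bar>\<gamma> j\<bar>) * (\<rho> m * A)" by (simp add: sum_distrib_right)
  also have "\<dots> < real n * \<rho> m * (1 + A)"
  proof -
    have "A \<ge> 0" unfolding A_def by (intro sum_nonneg) auto
    hence "(\<Sum>j=1..K. \<bar>\<gamma> j\<bar>) * A \<le> real n * A" using G_less by (intro mult_right_mono) auto
    also have "\<dots> < real n * (1 + A)" using n by simp
    finally have "\<rho> m * ((\<Sum>j=1..K. \<bar>\<gamma> j\<bar>) * A) < \<rho> m * (real n * (1 + A))"
      using dominating_weights_pos[of P Y m] unfolding \<rho>_def by simp
    thus ?thesis by (simp add: ac_simps)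
  qed
  also have "\<dots> \<le> \<rho> n * \<bar>P n y\<bar>"
    using dominating_weights_Suc_ge[of Y m y P] assms(2-4) n unfolding \<rho>_def A_def by simp
  finally have "\<bar>E\<bar> < \<bar>\<rho> n * P n y\<bar>"
    using dominating_weights_pos[of P Y n] unfolding \<rho>_def by (simp add: abs_mult)
  thus ?thesis
    using split sgn_add_eq_if_abs_less dominating_weights_pos[of P Y n]
    unfolding \<rho>_def by (simp add: sgn_mult)
qed

lemma sgn_poly_weighted_sum_eq_sgn_leading:
  fixes p :: "nat \<Rightarrow> real poly" and Y :: "nat \<Rightarrow> real set" and \<gamma> :: "nat \<Rightarrow> real"
  defines "\<rho> \<equiv> dominating_weights (\<lambda>n. poly (p n)) Y"
  assumes "finite (Y n)" and "y \<in> Y n" and "poly (p n) y \<noteq> 0"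
    and "\<gamma> 0 = 1" and "(\<Sum>j=1..K. \<bar>\<gamma> j\<bar>) < real n"
  shows "sgn (poly (\<Sum>j\<le>K. smult (\<gamma> j) (smult (\<rho> (n - j)) (p (n - j)))) y) = sgn (poly (p n) y)"
  using sgn_weighted_sum_eq_sgn_leading[where P = "\<lambda>n. poly (p n)" and Y = Y and n = n, OF assms(2-)]
  unfolding \<rho>_def by (simp add: poly_sum mult.assoc)

theorem mainTheorem3:
  fixes M :: "real measure" and phat :: "nat \<Rightarrow> real poly"
  assumes "sets M = sets borel"
    and "finite_moments M"
    and "infinite (measure_support M)"
    and "monic_orthogonal_polys M phat"
  shows "\<exists>\<rho> :: nat \<Rightarrow> real. (\<forall>n. \<rho> n > 0) \<and>
    (\<forall>(K::nat) (\<gamma>::nat \<Rightarrow> real). K > 0 \<and> \<gamma> 0 = 1 \<and> \<gamma> K \<noteq> 0 \<longrightarrow>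
       (\<exists>N. \<forall>n\<ge>N. only_real_zeros
          (\<Sum>j\<le>K. smult (\<gamma> j) (smult (\<rho> (n - j)) (phat (n - j))))))"
proof -
  note deg = monic_orthogonal_polys_degree[OF assms(4)]
  obtain e where "\<And>n. e n > 0"
    and sep: "\<And>n s t. poly (phat n) s = 0 \<Longrightarrow> poly (phat n) t = 0 \<Longrightarrow> s \<noteq> t \<Longrightarrow> 2 * e n < \<bar>s - t\<bar>"
    and chg: "\<And>n s. poly (phat n) s = 0 \<Longrightarrow> poly (phat n) (s - e n) * poly (phat n) (s + e n) < 0"
    using sign_change_radii_monic_orthogonal_polys[OF assms] by blast
  define Y where "Y n = (\<lambda>s. s - e n) ` {x. poly (phat n) x = 0} \<union> (\<lambda>s. s + e n) ` {x. poly (phat n) x = 0}"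
    for n
  define \<rho> where "\<rho> = dominating_weights (\<lambda>n. poly (phat n)) Y"
  have "\<exists>N. \<forall>n\<ge>N. only_real_zeros (\<Sum>j\<le>K. smult (\<gamma> j) (smult (\<rho> (n - j)) (phat (n - j))))"
    if "\<gamma> 0 = 1" for K and \<gamma> :: "nat \<Rightarrow> real"
  proof (intro exI allI impI)
    fix n assume n: "nat \<lfloor>\<Sum>j=1..K. \<bar>\<gamma> j\<bar>\<rfloor> + 1 \<le> n"
    hence G: "(\<Sum>j=1..K. \<bar>\<gamma> j\<bar>) < real n" by linarith
    define q where "q = (\<Sum>j\<le>K. smult (\<gamma> j) (smult (\<rho> (n - j)) (phat (n - j))))"
    have "finite (Y n)" unfolding Y_def using poly_roots_finite[OF deg(2)] by simp
    have "sgn (poly q y) = sgn (poly (phat n) y)" if "y \<in> Y n" for y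
    proof -
      have "poly (phat n) y \<noteq> 0" using that chg unfolding Y_def by force
      from sgn_poly_weighted_sum_eq_sgn_leading[where p = phat and Y = Y and n = n,
          OF \<open>finite (Y n)\<close> that this \<open>\<gamma> 0 = 1\<close> G]
      show ?thesis unfolding q_def \<rho>_def .
    qed
    moreover have "0 < n" using n by simp
    moreover have "degree q \<le> n"
      unfolding q_def using deg by (auto intro!: degree_sum_le degree_smult_le[THEN order_trans])
    ultimately show "only_real_zeros q"
      using card_roots_monic_orthogonal_poly[OF assms] deg \<open>e n > 0\<close> sep chg
      by (intro only_real_zeros_if_sgn_agrees[of "phat n" q "e n"]) (auto simp: Y_def)
  qed
  thus ?thesis using dominating_weights_pos unfolding \<rho>_def by blast
qed

end
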